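(* Let $b>a>0$ and $t>0$. For any measurable $f:[0,t]\to\mathbb{R}_+$, $$\int_0^t\frac{ds}{(s+f(s))^{1+a}}\le\kappa(a,b)\Big(\int_0^t\frac{ds}{(s+f(s))^{1+b}}\Big)^{a/b},\qquad \kappa(a,b)=\frac{a+1}{a}\Big[\frac{b}{b+1}\Big]^{a/b}.$$ *)

theory Defs
  imports "HOL-Analysis.Analysis"
begin

definition ennreal_powr :: "ennreal \<Rightarrow> real \<Rightarrow> ennreal" where
  "ennreal_powr x p = (if x = \<infinity> then \<infinity> else ennreal (enn2real x powr p))"

definition kappa :: "real \<Rightarrow> real \<Rightarrow> real" where
  "kappa a b = (a + 1) / a * (b / (b + 1)) powr (a / b)"

end

theory Submission
  imports Defs
begin

(*
  For c > 0 let h(y) = y powr -(1+a) - lambda * y powr -(1+b), with lambda chosen so that h'(c) = 0.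
  Since b > a, h increases on (0, c] and decreases on [c, oo), so for y >= s >= 0 we get
  h(y) <= h(max c s). With y = s + f s this is the pointwise bound
    (s + f s) powr -(1+a) <= lambda * (s + f s) powr -(1+b) + h(max c s),
  and h(max c s) is integrable over s >= 0 with integral at most K * c powr -a,
  K = (b - a)(a + 1)/(a b). Hence I_a <= lambda(c) * I_b + K * c powr -a for every c > 0,
  and choosing c optimally (c powr b proportional to 1 / I_b) gives kappa(a,b) * I_b powr (a/b).
*)

definition crit_coeff :: "real \<Rightarrow> real \<Rightarrow> real \<Rightarrow> real" where
  "crit_coeff a b c = (1 + a) / (1 + b) * c powr (b - a)"

definition power_gap :: "real \<Rightarrow> real \<Rightarrow> real \<Rightarrow> real \<Rightarrow> real" where
  "power_gap a b c y = y powr -(1 + a) - crit_coeff a b c * y powr -(1 + b)"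

definition gap_coeff :: "real \<Rightarrow> real \<Rightarrow> real" where
  "gap_coeff a b = (b - a) * (a + 1) / (a * b)"

context
  fixes a b :: real
  assumes a_pos: "0 < a" and a_less_b: "a < b"
begin

lemma crit_coeff_nonneg: "0 \<le> crit_coeff a b c"
  using a_pos a_less_b by (simp add: crit_coeff_def)

lemma gap_coeff_pos: "0 < gap_coeff a b"
  using a_pos a_less_b by (simp add: gap_coeff_def)

lemma kappa_pos: "0 < kappa a b"
  using a_pos a_less_b by (simp add: kappa_def)

lemma has_real_derivative_power_gap:
  assumes "0 < y"
  shows "(power_gap a b c has_real_derivative
           (1 + a) * y powr -(2 + b) * (c powr (b - a) - y powr (b - a))) (at y)"
proof -
  have "(power_gap a b c has_real_derivative
          -(1 + a) * y powr (-(1 + a) - 1) - crit_coeff a b c * (-(1 + b) * y powr (-(1 + b) - 1))) (at y)"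
    unfolding power_gap_def[abs_def] using assms
    by (auto intro!: derivative_eq_intros has_real_derivative_powr)
  also have "y powr (-(1 + a) - 1) = y powr (b - a) * y powr -(2 + b)"
    by (subst powr_add[symmetric]) (simp add: algebra_simps)
  also have "y powr (-(1 + b) - 1) = y powr -(2 + b)"
    by (simp add: algebra_simps)
  also have "-(1 + a) * (y powr (b - a) * y powr -(2 + b)) - crit_coeff a b c * (-(1 + b) * y powr -(2 + b))
      = (1 + a) * y powr -(2 + b) * (c powr (b - a) - y powr (b - a))"
    using a_pos a_less_b by (simp add: crit_coeff_def field_simps)
  finally show ?thesis .
qed

lemma power_gap_mono:
  assumes "0 < y" "y \<le> z" "z \<le> c"
  shows "power_gap a b c y \<le> power_gap a b c z"
proof (rule DERIV_nonneg_imp_nondecreasing[OF \<open>y \<le> z\<close>])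
  fix x assume "y \<le> x" "x \<le> z"
  then have "0 < x" "x powr (b - a) \<le> c powr (b - a)"
    using assms a_less_b by (auto intro: powr_mono2)
  then show "\<exists>d. (power_gap a b c has_real_derivative d) (at x) \<and> 0 \<le> d"
    using a_pos has_real_derivative_power_gap by fastforce
qed

lemma power_gap_antimono:
  assumes "0 < c" "c \<le> y" "y \<le> z"
  shows "power_gap a b c z \<le> power_gap a b c y"
proof (rule DERIV_nonpos_imp_nonincreasing[OF \<open>y \<le> z\<close>])
  fix x assume "y \<le> x" "x \<le> z"
  then have "0 < x" "c powr (b - a) \<le> x powr (b - a)"
    using assms a_less_b by (auto intro: powr_mono2)
  then show "\<exists>d. (power_gap a b c has_real_derivative d) (at x) \<and> d \<le> 0"
    using a_pos has_real_derivative_power_gap by (fastforce simp: mult_le_0_iff)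
qed

lemma power_gap_le_max:
  assumes "0 < c" "s \<le> y" "0 < y"
  shows "power_gap a b c y \<le> power_gap a b c (max c s)"
proof (cases "y \<le> c")
  case True
  then show ?thesis using assms power_gap_mono[of y c c] by simp
next
  case False
  then show ?thesis using assms power_gap_antimono[of c "max c s" y] by simp
qed

lemma power_gap_nonneg:
  assumes "0 < c" "c \<le> y"
  shows "0 \<le> power_gap a b c y"
proof -
  have "crit_coeff a b c \<le> c powr (b - a)"
    unfolding crit_coeff_def using a_pos a_less_b by (intro mult_left_le_one_le) auto
  also have "\<dots> \<le> y powr (b - a)"
    using assms a_less_b by (intro powr_mono2) auto
  finally have "crit_coeff a b c \<le> y powr (b - a)" .
  then have "crit_coeff a b c * y powr -(1 + b) \<le> y powr (b - a) * y powr -(1 + b)"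
    by (simp add: mult_right_mono)
  also have "\<dots> = y powr -(1 + a)"
    by (subst powr_add[symmetric]) (simp add: algebra_simps)
  finally show ?thesis unfolding power_gap_def by simp
qed

lemma power_gap_crit:
  assumes "0 < c"
  shows "power_gap a b c c = (b - a) / (1 + b) * c powr -(1 + a)"
proof -
  have "c powr (b - a) * c powr -(1 + b) = c powr -(1 + a)"
    by (subst powr_add[symmetric]) (simp add: algebra_simps)
  moreover have "0 < 1 + b"
    using a_pos a_less_b by simp
  ultimately show ?thesis
    by (simp add: power_gap_def crit_coeff_def field_simps)
qed

lemma nn_integral_power_gap_max_le:
  assumes "0 < c"
  shows "(\<integral>\<^sup>+ s\<in>{0..}. ennreal (power_gap a b c (max c s)) \<partial>lborel)
         \<le> ennreal (gap_coeff a b * c powr -a)"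
proof -
  define F where "F s = - (s powr -a) / a + crit_coeff a b c * s powr -b / b" for s
  have [measurable]: "power_gap a b c \<in> borel_measurable borel"
    unfolding power_gap_def by measurable
  have gap_c: "0 \<le> power_gap a b c c"
    using power_gap_nonneg assms by simp
  have crit_c: "crit_coeff a b c * c powr -b = (1 + a) / (1 + b) * c powr -a"
    by (simp add: crit_coeff_def powr_add[symmetric])
  have tail: "\<integral>\<^sup>+ s. ennreal (power_gap a b c s) * indicator {c..} s \<partial>lborel = ennreal (- F c)"
  proof -
    have "(F \<longlongrightarrow> - 0 / a + crit_coeff a b c * 0 / b) at_top"
      unfolding F_def using a_pos a_less_b
      by (intro tendsto_intros tendsto_neg_powr filterlim_ident) auto
    moreover have "(F has_real_derivative power_gap a b c s) (at s)" if "c \<le> s" for s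
    proof -
      have "(F has_real_derivative - (-a * s powr (-a - 1)) / a + crit_coeff a b c * (-b * s powr (-b - 1)) / b) (at s)"
        unfolding F_def[abs_def] using that assms
        by (auto intro!: derivative_eq_intros has_real_derivative_powr)
      moreover have "s powr (-a - 1) = s powr -(1 + a)" "s powr (-b - 1) = s powr -(1 + b)"
        by (rule arg_cong[where f = "(powr) s"]; simp)+
      ultimately show ?thesis
        using a_pos a_less_b by (simp add: power_gap_def)
    qed
    ultimately show ?thesis
      using assms power_gap_nonneg by (subst nn_integral_FTC_atLeast) auto
  qed
  have F_c: "- F c = c powr -a * (1 / a - (1 + a) / ((1 + b) * b))"
    using crit_c by (simp add: F_def algebra_simps)
  have "a * (1 + a) \<le> b * (1 + b)"
    using a_pos a_less_b by (intro mult_mono) auto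
  then have "(1 + a) / ((1 + b) * b) \<le> 1 / a"
    using a_pos a_less_b by (simp add: divide_simps mult.commute)
  \<comment> \<open>needed because \<open>ennreal\<close> truncates negative values\<close>
  then have F_c_nonneg: "0 \<le> - F c"
    unfolding F_c by simp
  have "(\<integral>\<^sup>+ s\<in>{0..}. ennreal (power_gap a b c (max c s)) \<partial>lborel)
      \<le> \<integral>\<^sup>+ s. ennreal (power_gap a b c c) * indicator {0..c} s
                + ennreal (power_gap a b c s) * indicator {c..} s \<partial>lborel"
    by (intro nn_integral_mono) (auto simp: indicator_def max_def)
  also have "\<dots> = ennreal (power_gap a b c c) * ennreal c + ennreal (- F c)"
    using assms by (simp add: nn_integral_add nn_integral_cmult_indicator tail)
  also have "\<dots> = ennreal (c * power_gap a b c c - F c)"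
    using assms gap_c F_c_nonneg by (simp add: ennreal_mult[symmetric] ennreal_plus[symmetric] mult.commute)
  also have "c * power_gap a b c c - F c = gap_coeff a b * c powr -a"
  proof -
    have "(b - a) / (1 + b) + (1 / a - (1 + a) / ((1 + b) * b)) = gap_coeff a b"
    proof -
      have "a \<noteq> 0" "b \<noteq> 0" "1 + b \<noteq> 0"
        using a_pos a_less_b by auto
      then show ?thesis
        unfolding gap_coeff_def by (simp add: divide_simps) (simp add: algebra_simps)
    qed
    moreover have "c * power_gap a b c c = (b - a) / (1 + b) * c powr -a"
      using assms by (simp add: power_gap_crit powr_add[symmetric] powr_mult_base)
    then have "c * power_gap a b c c - F c
        = (b - a) / (1 + b) * c powr -a + c powr -a * (1 / a - (1 + a) / ((1 + b) * b))"
      using F_c by linarith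
    ultimately show ?thesis
      by (metis distrib_right mult.commute)
  qed
  finally show ?thesis .
qed

lemma inv_powr_le_crit_plus_gap:
  assumes "0 < c" "0 \<le> s" "s \<le> y"
  shows "1 / y powr (1 + a) \<le> crit_coeff a b c * (1 / y powr (1 + b)) + power_gap a b c (max c s)"
proof (cases "y = 0")
  case True
  \<comment> \<open>here both powers are the junk value \<open>1 / 0 = 0\<close>\<close>
  then show ?thesis
    using assms power_gap_nonneg[of c "max c s"] by simp
next
  case False
  then have "power_gap a b c y \<le> power_gap a b c (max c s)"
    using assms by (intro power_gap_le_max) auto
  moreover have "power_gap a b c y = 1 / y powr (1 + a) - crit_coeff a b c * (1 / y powr (1 + b))"
    by (simp only: power_gap_def powr_minus_divide)
  ultimately show ?thesis
    by linarith
qed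

lemma nn_integral_inv_powr_le:
  fixes g :: "real \<Rightarrow> real"
  assumes "0 < c"
    and g_meas: "g \<in> borel_measurable (restrict_space lebesgue {0..t})"
    and g_ge: "\<forall>s\<in>{0..t}. s \<le> g s"
  shows "(\<integral>\<^sup>+ s\<in>{0..t}. ennreal (1 / g s powr (1 + a)) \<partial>lebesgue)
         \<le> ennreal (crit_coeff a b c) * (\<integral>\<^sup>+ s\<in>{0..t}. ennreal (1 / g s powr (1 + b)) \<partial>lebesgue)
           + ennreal (gap_coeff a b * c powr -a)"
proof -
  let ?M = "restrict_space lebesgue {0..t}"
  let ?gap = "\<lambda>s. ennreal (power_gap a b c (max c s))"
  have restrict: "(\<integral>\<^sup>+ s\<in>{0..t}. h s \<partial>lebesgue) = (\<integral>\<^sup>+ s. h s \<partial>?M)" for h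
    by (subst nn_integral_restrict_space) auto
  have [measurable]: "?gap \<in> borel_measurable borel"
    unfolding power_gap_def by measurable
  then have [measurable]: "?gap \<in> borel_measurable ?M"
    by (intro measurable_restrict_space1 measurable_completion) simp
  have [measurable]: "g \<in> borel_measurable ?M"
    using g_meas .
  have "(\<integral>\<^sup>+ s. ennreal (1 / g s powr (1 + a)) \<partial>?M)
      \<le> (\<integral>\<^sup>+ s. ennreal (crit_coeff a b c) * ennreal (1 / g s powr (1 + b)) + ?gap s \<partial>?M)"
  proof (rule nn_integral_mono)
    fix s assume "s \<in> space ?M"
    then have "0 \<le> s" "s \<le> g s"
      using g_ge by (auto simp: space_restrict_space)
    then have "ennreal (1 / g s powr (1 + a))
        \<le> ennreal (crit_coeff a b c * (1 / g s powr (1 + b)) + power_gap a b c (max c s))"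
      using assms inv_powr_le_crit_plus_gap by (intro ennreal_leI) auto
    also have "\<dots> = ennreal (crit_coeff a b c) * ennreal (1 / g s powr (1 + b)) + ?gap s"
      using crit_coeff_nonneg power_gap_nonneg[of c "max c s"] assms
      by (simp add: ennreal_plus ennreal_mult del: times_divide_eq_right)
    finally show "ennreal (1 / g s powr (1 + a)) \<le> \<dots>" .
  qed
  also have "\<dots> = ennreal (crit_coeff a b c) * (\<integral>\<^sup>+ s. ennreal (1 / g s powr (1 + b)) \<partial>?M)
      + (\<integral>\<^sup>+ s. ?gap s \<partial>?M)"
    by (simp add: nn_integral_add nn_integral_cmult)
  also have "(\<integral>\<^sup>+ s. ?gap s \<partial>?M) \<le> (\<integral>\<^sup>+ s\<in>{0..}. ?gap s \<partial>lborel)"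
  proof -
    have "(\<integral>\<^sup>+ s. ?gap s \<partial>?M) = (\<integral>\<^sup>+ s\<in>{0..t}. ?gap s \<partial>lborel)"
      unfolding restrict[symmetric] by (simp add: nn_integral_completion)
    also have "\<dots> \<le> (\<integral>\<^sup>+ s\<in>{0..}. ?gap s \<partial>lborel)"
      by (intro nn_integral_mono mult_left_mono) (auto simp: indicator_def)
    finally show ?thesis .
  qed
  also have "(\<integral>\<^sup>+ s\<in>{0..}. ?gap s \<partial>lborel) \<le> ennreal (gap_coeff a b * c powr -a)"
    using \<open>0 < c\<close> by (rule nn_integral_power_gap_max_le)
  finally show ?thesis
    unfolding restrict by (simp add: add_left_mono)
qed

lemma crit_bound_at_optimum:
  assumes "0 < j"
  defines "c \<equiv> ((1 + b) / (b * j)) powr (1 / b)"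
  shows "crit_coeff a b c * j + gap_coeff a b * c powr -a = kappa a b * j powr (a / b)"
proof -
  define q where "q = (1 + b) / (b * j)"
  define Q where "Q = q powr (-a / b)"
  have q_pos: "0 < q"
    unfolding q_def using assms a_pos a_less_b by simp
  have "c powr (b - a) = q powr (1 + -a / b)"
    unfolding c_def q_def[symmetric] using q_pos a_pos a_less_b by (simp add: powr_powr field_simps)
  then have c_crit: "c powr (b - a) = q * Q"
    unfolding Q_def using q_pos powr_add[of q 1 "-a / b"] by simp
  have c_tail: "c powr -a = Q"
    unfolding c_def q_def[symmetric] Q_def using q_pos by (simp add: powr_powr)
  have "crit_coeff a b c * j + gap_coeff a b * c powr -a
      = ((1 + a) / (1 + b) * (q * j) + gap_coeff a b) * Q"
    unfolding crit_coeff_def c_crit c_tail by (simp add: algebra_simps)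
  also have "(1 + a) / (1 + b) * (q * j) + gap_coeff a b = (a + 1) / a"
  proof -
    have "a \<noteq> 0" "b \<noteq> 0" "1 + b \<noteq> 0"
      using a_pos a_less_b by auto
    then show ?thesis
      unfolding q_def gap_coeff_def using assms by (simp add: divide_simps) (simp add: algebra_simps)
  qed
  also have "Q = (b / (b + 1)) powr (a / b) * j powr (a / b)"
  proof -
    have "Q = inverse q powr (a / b)"
      unfolding Q_def using q_pos by (simp add: inverse_powr powr_minus)
    also have "inverse q = b / (b + 1) * j"
      unfolding q_def using assms by (simp add: field_simps)
    also have "(b / (b + 1) * j) powr (a / b) = (b / (b + 1)) powr (a / b) * j powr (a / b)"
      using assms a_pos a_less_b by (intro powr_mult)
    finally show ?thesis .
  qed
  finally show ?thesis
    unfolding kappa_def by simp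
qed

lemma le_kappa_powr_of_crit_bounds:
  fixes I :: ennreal
  assumes "0 \<le> j"
    and bound: "\<And>c. 0 < c \<Longrightarrow>
      I \<le> ennreal (crit_coeff a b c) * ennreal j + ennreal (gap_coeff a b * c powr -a)"
  shows "I \<le> ennreal (kappa a b) * ennreal (j powr (a / b))"
proof (cases "j = 0")
  case True
  have "I \<le> 0"
  proof (rule ennreal_le_epsilon)
    fix e :: real assume "0 < e"
    define c where "c = (gap_coeff a b / e) powr (1 / a)"
    have "0 < c"
      unfolding c_def using gap_coeff_pos \<open>0 < e\<close> by simp
    moreover have "gap_coeff a b * c powr -a = e"
      unfolding c_def using gap_coeff_pos \<open>0 < e\<close> a_pos by (simp add: powr_powr powr_minus_divide)
    ultimately show "I \<le> 0 + ennreal e"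
      using bound True by fastforce
  qed
  then show ?thesis
    by simp
next
  case False
  then have "0 < j"
    using assms by simp
  define c where "c = ((1 + b) / (b * j)) powr (1 / b)"
  have "0 < c"
    unfolding c_def using \<open>0 < j\<close> a_pos a_less_b by simp
  then have "I \<le> ennreal (crit_coeff a b c) * ennreal j + ennreal (gap_coeff a b * c powr -a)"
    by (rule bound)
  also have "\<dots> = ennreal (crit_coeff a b c * j + gap_coeff a b * c powr -a)"
    using \<open>0 < j\<close> \<open>0 < c\<close> crit_coeff_nonneg gap_coeff_pos
    by (simp add: ennreal_mult ennreal_plus)
  also have "crit_coeff a b c * j + gap_coeff a b * c powr -a = kappa a b * j powr (a / b)"
    unfolding c_def using \<open>0 < j\<close> by (rule crit_bound_at_optimum)
  also have "ennreal (kappa a b * j powr (a / b)) = ennreal (kappa a b) * ennreal (j powr (a / b))"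
    using kappa_pos by (simp add: ennreal_mult)
  finally show ?thesis .
qed

end

theorem lemma1p3:
  fixes a b t :: real and f :: "real \<Rightarrow> real"
  assumes "0 < a" "a < b" "0 < t"
    and "f \<in> borel_measurable (restrict_space lebesgue {0..t})"
    and "\<forall>s\<in>{0..t}. 0 \<le> f s"
  shows "(\<integral>\<^sup>+ s\<in>{0..t}. ennreal (1 / (s + f s) powr (1 + a)) \<partial>lebesgue)
         \<le> ennreal (kappa a b) *
           ennreal_powr (\<integral>\<^sup>+ s\<in>{0..t}. ennreal (1 / (s + f s) powr (1 + b)) \<partial>lebesgue) (a / b)"
proof -
  let ?I = "\<integral>\<^sup>+ s\<in>{0..t}. ennreal (1 / (s + f s) powr (1 + a)) \<partial>lebesgue"
  let ?J = "\<integral>\<^sup>+ s\<in>{0..t}. ennreal (1 / (s + f s) powr (1 + b)) \<partial>lebesgue"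
  have "(\<lambda>s::real. s) \<in> borel_measurable (restrict_space lebesgue {0..t})"
    by (intro measurable_restrict_space1 measurable_completion) simp
  then have "(\<lambda>s. s + f s) \<in> borel_measurable (restrict_space lebesgue {0..t})"
    using assms(4) by (rule borel_measurable_add)
  then have bound: "?I \<le> ennreal (crit_coeff a b c) * ?J + ennreal (gap_coeff a b * c powr -a)"
    if "0 < c" for c
    using nn_integral_inv_powr_le[OF assms(1,2) that] assms(5) by auto
  show ?thesis
  proof (cases ?J rule: ennreal_cases)
    case top
    then show ?thesis
      using kappa_pos[OF assms(1,2)] by (simp add: ennreal_powr_def ennreal_mult_top)
  next
    case (real j)
    then show ?thesis
      using le_kappa_powr_of_crit_bounds[OF assms(1,2), of j ?I] bound
      by (simp add: ennreal_powr_def)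
  qed
qed

end
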